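(* Let $\mathcal{A}=\mathcal{A}(R,\boldsymbol{\sigma},\boldsymbol{t})$ and $\mathcal{A}'=\mathcal{A}(R,\boldsymbol{\sigma},\boldsymbol{t}')$ be two twisted generalized Weyl algebras of rank two (with $t_1,t_2$ regular in $R$ and satisfying the consistency equation) such that $t_i'=s_it_i$ for $i=1,2$, where $s_1,s_2$ are central invertible elements of $R$ satisfying $\sigma_2^{1/2}(s_1)\,\sigma_1^{1/2}(s_2)=\sigma_2^{-1/2}(s_1)\,\sigma_1^{-1/2}(s_2)$. Then $\mathcal{A}\simeq\mathcal{A}'$ as $\mathbb{Z}^2$-graded $R$-rings.
   Context: Let $\Bbbk$ be a field, $R$ a unital $\Bbbk$-algebra, $\sigma_1^{1/2},\sigma_2^{1/2}$ commuting automorphisms of $R$ ($\sigma_i=(\sigma_i^{1/2})^2$), $t_1,t_2\in Z(R)$. The TGWC $\tilde{\mathcal{A}}(R,\boldsymbol{\sigma},\boldsymbol{t})$ is obtained from $R$ by adjoining $X_1^\pm,X_2^\pm$ with relations $X_i^\pm r=\sigma_i^{\pm1}(r)X_i^\pm$, $X_i^\pm X_i^\mp=\sigma_i^{\pm1/2}(t_i)$, $[X_1^\pm,X_2^\mp]=0$, graded by $\deg r=0$, $\deg X_i^\pm=\pm\mathbf{e}_i$. The TGWA is $\tilde{\mathcal{A}}$ modulo the sum of all graded ideals meeting the degree-zero part trivially. Consistency equation (rank two): $\sigma_2^{1/2}(t_1)\sigma_1^{1/2}(t_2)=\sigma_2^{-1/2}(t_1)\sigma_1^{-1/2}(t_2)$;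 under it $R$ is identified with the degree-zero component. *)

theory Defs
  imports "HOL-Algebra.QuotRing"
begin

text \<open>Generators X_1^+, X_1^-, X_2^+, X_2^- of a rank two TGWC.\<close>
datatype gen = P1 | M1 | P2 | M2

definition ring_aut :: "('a::ring_1 \<Rightarrow> 'a) \<Rightarrow> bool" where
  "ring_aut f \<longleftrightarrow> bij f \<and> (\<forall>x y. f (x + y) = f x + f y) \<and>
     (\<forall>x y. f (x * y) = f x * f y) \<and> f 1 = 1"

definition k_algebra_map :: "('k::field \<Rightarrow> 'a::ring_1) \<Rightarrow> bool" where
  "k_algebra_map phi \<longleftrightarrow> (\<forall>x y. phi (x + y) = phi x + phi y) \<and>
     (\<forall>x y. phi (x * y) = phi x * phi y) \<and> phi 1 = 1 \<and>
     (\<forall>c r. phi c * r = r * phi c)"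

definition central :: "'a::ring_1 \<Rightarrow> bool" where
  "central z \<longleftrightarrow> (\<forall>r. z * r = r * z)"

definition regular_elem :: "'a::ring_1 \<Rightarrow> bool" where
  "regular_elem z \<longleftrightarrow> (\<forall>r. z * r = 0 \<longrightarrow> r = 0) \<and> (\<forall>r. r * z = 0 \<longrightarrow> r = 0)"

definition invertible_elem :: "'a::ring_1 \<Rightarrow> bool" where
  "invertible_elem z \<longleftrightarrow> (\<exists>y. z * y = 1 \<and> y * z = 1)"

text \<open>Action of a generator: X_i^+ acts by sigma_i = (sigma_i^{1/2})^2, X_i^- by sigma_i^{-1}.
  sh1, sh2 are the square roots sigma_1^{1/2}, sigma_2^{1/2}.\<close>
fun gen_aut :: "('a \<Rightarrow> 'a) \<Rightarrow> ('a \<Rightarrow> 'a) \<Rightarrow> gen \<Rightarrow> 'a \<Rightarrow> 'a" where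
  "gen_aut sh1 sh2 P1 = sh1 \<circ> sh1"
| "gen_aut sh1 sh2 M1 = Hilbert_Choice.inv sh1 \<circ> Hilbert_Choice.inv sh1"
| "gen_aut sh1 sh2 P2 = sh2 \<circ> sh2"
| "gen_aut sh1 sh2 M2 = Hilbert_Choice.inv sh2 \<circ> Hilbert_Choice.inv sh2"

text \<open>For a word w = a_1...a_n, X_w r = word_aut w r X_w.\<close>
fun word_aut :: "('a \<Rightarrow> 'a) \<Rightarrow> ('a \<Rightarrow> 'a) \<Rightarrow> gen list \<Rightarrow> 'a \<Rightarrow> 'a" where
  "word_aut sh1 sh2 [] = id"
| "word_aut sh1 sh2 (a # w) = gen_aut sh1 sh2 a \<circ> word_aut sh1 sh2 w"

fun gen_deg :: "gen \<Rightarrow> int \<times> int" where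
  "gen_deg P1 = (1, 0)" | "gen_deg M1 = (-1, 0)" | "gen_deg P2 = (0, 1)" | "gen_deg M2 = (0, -1)"

definition word_deg :: "gen list \<Rightarrow> int \<times> int" where
  "word_deg w = (\<Sum>a\<leftarrow>w. fst (gen_deg a), \<Sum>a\<leftarrow>w. snd (gen_deg a))"

text \<open>Elements: finitely supported functions from words to R, i.e. sums of r_w X_w.
  This is the R-ring generated by R and the X's subject only to X r = sigma(r) X.\<close>
definition skew_mult :: "('a::ring_1 \<Rightarrow> 'a) \<Rightarrow> ('a \<Rightarrow> 'a) \<Rightarrow>
    (gen list \<Rightarrow> 'a) \<Rightarrow> (gen list \<Rightarrow> 'a) \<Rightarrow> gen list \<Rightarrow> 'a" where
  "skew_mult sh1 sh2 f g w =
     (\<Sum>n\<in>{0..length w}. f (take n w) * word_aut sh1 sh2 (take n w) (g (drop n w)))"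

definition free_skew :: "('a::ring_1 \<Rightarrow> 'a) \<Rightarrow> ('a \<Rightarrow> 'a) \<Rightarrow> (gen list \<Rightarrow> 'a) ring" where
  "free_skew sh1 sh2 =
    \<lparr>carrier = {f. finite {w. f w \<noteq> 0}},
     mult = skew_mult sh1 sh2,
     one = (\<lambda>w. if w = [] then 1 else 0),
     zero = (\<lambda>w. 0),
     add = (\<lambda>f g w. f w + g w)\<rparr>"

definition emb :: "'a::ring_1 \<Rightarrow> gen list \<Rightarrow> 'a" where
  "emb r = (\<lambda>w. if w = [] then r else 0)"

definition Xg :: "gen \<Rightarrow> gen list \<Rightarrow> 'a::ring_1" where
  "Xg a = (\<lambda>w. if w = [a] then 1 else 0)"

definition free_comp :: "('a::ring_1 \<Rightarrow> 'a) \<Rightarrow> ('a \<Rightarrow> 'a) \<Rightarrow> int \<times> int \<Rightarrow> (gen list \<Rightarrow> 'a) set" where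
  "free_comp sh1 sh2 d = {f \<in> carrier (free_skew sh1 sh2). \<forall>w. f w \<noteq> 0 \<longrightarrow> word_deg w = d}"

definition tgwc_rels :: "('a::ring_1 \<Rightarrow> 'a) \<Rightarrow> ('a \<Rightarrow> 'a) \<Rightarrow> 'a \<Rightarrow> 'a \<Rightarrow> (gen list \<Rightarrow> 'a) set" where
  "tgwc_rels sh1 sh2 t1 t2 = (let F = free_skew sh1 sh2 in
     {\<lambda>w. (Xg P1 \<otimes>\<^bsub>F\<^esub> Xg M1) w - emb (sh1 t1) w,
      \<lambda>w. (Xg M1 \<otimes>\<^bsub>F\<^esub> Xg P1) w - emb (Hilbert_Choice.inv sh1 t1) w,
      \<lambda>w. (Xg P2 \<otimes>\<^bsub>F\<^esub> Xg M2) w - emb (sh2 t2) w,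
      \<lambda>w. (Xg M2 \<otimes>\<^bsub>F\<^esub> Xg P2) w - emb (Hilbert_Choice.inv sh2 t2) w,
      \<lambda>w. (Xg P1 \<otimes>\<^bsub>F\<^esub> Xg M2) w - (Xg M2 \<otimes>\<^bsub>F\<^esub> Xg P1) w,
      \<lambda>w. (Xg M1 \<otimes>\<^bsub>F\<^esub> Xg P2) w - (Xg P2 \<otimes>\<^bsub>F\<^esub> Xg M1) w})"

definition tgwc_ideal where
  "tgwc_ideal sh1 sh2 t1 t2 = genideal (free_skew sh1 sh2) (tgwc_rels sh1 sh2 t1 t2)"

definition tgwc :: "('a::ring_1 \<Rightarrow> 'a) \<Rightarrow> ('a \<Rightarrow> 'a) \<Rightarrow> 'a \<Rightarrow> 'a \<Rightarrow> (gen list \<Rightarrow> 'a) set ring" where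
  "tgwc sh1 sh2 t1 t2 = free_skew sh1 sh2 Quot tgwc_ideal sh1 sh2 t1 t2"

definition tgwc_proj where
  "tgwc_proj sh1 sh2 t1 t2 f = tgwc_ideal sh1 sh2 t1 t2 +>\<^bsub>free_skew sh1 sh2\<^esub> f"

definition tgwc_comp where
  "tgwc_comp sh1 sh2 t1 t2 d = tgwc_proj sh1 sh2 t1 t2 ` free_comp sh1 sh2 d"

definition tgwc_graded_ideal where
  "tgwc_graded_ideal sh1 sh2 t1 t2 I \<longleftrightarrow> ideal I (tgwc sh1 sh2 t1 t2) \<and>
     (\<forall>x\<in>I. \<exists>D y. finite D \<and> (\<forall>d\<in>D. y d \<in> I \<inter> tgwc_comp sh1 sh2 t1 t2 d) \<and>
         x = finsum (tgwc sh1 sh2 t1 t2) y D)"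

definition tgwa_ideal where
  "tgwa_ideal sh1 sh2 t1 t2 = genideal (tgwc sh1 sh2 t1 t2)
     (\<Union>{I. tgwc_graded_ideal sh1 sh2 t1 t2 I \<and>
           I \<inter> tgwc_comp sh1 sh2 t1 t2 (0, 0) = {\<zero>\<^bsub>tgwc sh1 sh2 t1 t2\<^esub>}})"

definition tgwa :: "('a::ring_1 \<Rightarrow> 'a) \<Rightarrow> ('a \<Rightarrow> 'a) \<Rightarrow> 'a \<Rightarrow> 'a \<Rightarrow> (gen list \<Rightarrow> 'a) set set ring" where
  "tgwa sh1 sh2 t1 t2 = tgwc sh1 sh2 t1 t2 Quot tgwa_ideal sh1 sh2 t1 t2"

definition tgwa_proj where
  "tgwa_proj sh1 sh2 t1 t2 f =
     tgwa_ideal sh1 sh2 t1 t2 +>\<^bsub>tgwc sh1 sh2 t1 t2\<^esub> tgwc_proj sh1 sh2 t1 t2 f"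

definition tgwa_comp where
  "tgwa_comp sh1 sh2 t1 t2 d = tgwa_proj sh1 sh2 t1 t2 ` free_comp sh1 sh2 d"

definition tgwa_emb where
  "tgwa_emb sh1 sh2 t1 t2 r = tgwa_proj sh1 sh2 t1 t2 (emb r)"

definition graded_R_ring_iso where
  "graded_R_ring_iso sh1 sh2 t1 t2 t1' t2' \<phi> \<longleftrightarrow>
     \<phi> \<in> ring_iso (tgwa sh1 sh2 t1 t2) (tgwa sh1 sh2 t1' t2') \<and>
     (\<forall>r. \<phi> (tgwa_emb sh1 sh2 t1 t2 r) = tgwa_emb sh1 sh2 t1' t2' r) \<and>
     (\<forall>d. \<phi> ` tgwa_comp sh1 sh2 t1 t2 d = tgwa_comp sh1 sh2 t1' t2' d)"

end

theory Submission
  imports Defs "HOL-Algebra.UnivPoly"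
begin

text \<open>Let \<open>c\<^sub>1\<^sup>+ = \<sigma>\<^sub>1\<^bsup>1/2\<^esup>(s\<^sub>1\<^sup>-\<^sup>1)\<close>, \<open>c\<^sub>2\<^sup>- = \<sigma>\<^sub>2\<^bsup>-1/2\<^esup>(s\<^sub>2\<^sup>-\<^sup>1)\<close> and \<open>c\<^sub>1\<^sup>- = c\<^sub>2\<^sup>+ = 1\<close>. The
  \<open>R\<close>-linear map \<open>X\<^sub>a \<mapsto> c\<^sub>a X\<^sub>a\<close> is a degree preserving automorphism of the free skew ring
  over \<open>R\<close>, because the \<open>c\<^sub>a\<close> are central units. It multiplies each defining relation of the
  TGWC for \<open>t\<close> by a central unit into the corresponding relation for \<open>t' = s t\<close>; for the
  relation \<open>X\<^sub>1\<^sup>+X\<^sub>2\<^sup>- = X\<^sub>2\<^sup>-X\<^sub>1\<^sup>+\<close> the two scalars agree precisely by the consistency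
  equation for \<open>s\<close>. So the automorphism maps one defining ideal onto the other and induces a
  graded \<open>R\<close>-ring isomorphism of the TGWCs. Such an isomorphism permutes the graded ideals meeting
  the degree zero part trivially, hence descends to the TGWAs.\<close>

section \<open>Ring isomorphisms of the underlying types\<close>

text \<open>Unlike \<open>ring_iso\<close>, the bijection is between whole types and the operations are preserved
  also off the carrier; this is what lets ideals, cosets and quotient rings be transported by
  plain images.\<close>
definition global_ring_iso :: "('a \<Rightarrow> 'b) \<Rightarrow> 'a ring \<Rightarrow> 'b ring \<Rightarrow> bool" where
  "global_ring_iso h R S \<longleftrightarrow> bij h \<and> h ` carrier R = carrier S \<and>
     (\<forall>x y. h (x \<otimes>\<^bsub>R\<^esub> y) = h x \<otimes>\<^bsub>S\<^esub> h y) \<and>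
     (\<forall>x y. h (x \<oplus>\<^bsub>R\<^esub> y) = h x \<oplus>\<^bsub>S\<^esub> h y) \<and>
     h \<one>\<^bsub>R\<^esub> = \<one>\<^bsub>S\<^esub> \<and> h \<zero>\<^bsub>R\<^esub> = \<zero>\<^bsub>S\<^esub>"

lemma global_ring_isoD:
  assumes "global_ring_iso h R S"
  shows "bij h" and "h ` carrier R = carrier S"
    and "h (x \<otimes>\<^bsub>R\<^esub> y) = h x \<otimes>\<^bsub>S\<^esub> h y" and "h (x \<oplus>\<^bsub>R\<^esub> y) = h x \<oplus>\<^bsub>S\<^esub> h y"
    and "h \<one>\<^bsub>R\<^esub> = \<one>\<^bsub>S\<^esub>" and "h \<zero>\<^bsub>R\<^esub> = \<zero>\<^bsub>S\<^esub>"
  using assms unfolding global_ring_iso_def by simp_all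

lemma global_ring_iso_imp_ring_iso: "global_ring_iso h R S \<Longrightarrow> h \<in> ring_iso R S"
  unfolding global_ring_iso_def
  by (intro ring_iso_memI) (auto simp: bij_betw_def bij_def intro: inj_on_subset)

lemma global_ring_iso_inv:
  assumes "global_ring_iso h R S"
  shows "global_ring_iso (Hilbert_Choice.inv h) S R"
proof -
  note h = global_ring_isoD[OF assms]
  have inv_h: "Hilbert_Choice.inv h (h x) = x" for x
    using h(1) by (simp add: bij_is_inj)
  have h_inv: "h (Hilbert_Choice.inv h y) = y" for y
    using h(1) by (simp add: bij_is_surj surj_f_inv_f)
  have "Hilbert_Choice.inv h ` carrier S = carrier R"
    by (simp add: h(2)[symmetric] image_image inv_h)
  moreover have "Hilbert_Choice.inv h (x \<otimes>\<^bsub>S\<^esub> y) =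
      Hilbert_Choice.inv h x \<otimes>\<^bsub>R\<^esub> Hilbert_Choice.inv h y" for x y
    by (metis h(3) h_inv inv_h)
  moreover have "Hilbert_Choice.inv h (x \<oplus>\<^bsub>S\<^esub> y) =
      Hilbert_Choice.inv h x \<oplus>\<^bsub>R\<^esub> Hilbert_Choice.inv h y" for x y
    by (metis h(4) h_inv inv_h)
  ultimately show ?thesis
    unfolding global_ring_iso_def using h(1,5,6) inv_h bij_imp_bij_inv by metis
qed

lemma global_ring_iso_ring_hom_ring:
  assumes "global_ring_iso h R S" and "ring R"
  shows "ring_hom_ring R S h"
proof -
  have "ring (S \<lparr> zero := h \<zero>\<^bsub>R\<^esub> \<rparr>)"
    using ring.ring_iso_imp_img_ring[OF assms(2) global_ring_iso_imp_ring_iso[OF assms(1)]] .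
  then have "ring S"
    using global_ring_isoD(6)[OF assms(1)] by simp
  then show ?thesis
    using global_ring_iso_imp_ring_iso[OF assms(1)] assms(2)
    unfolding ring_iso_def by (intro ring_hom_ring.intro ring_hom_ring_axioms.intro) blast+
qed

lemma global_ring_iso_ideal:
  assumes "global_ring_iso h R S" and "ideal I R"
  shows "ideal (h ` I) S"
proof -
  interpret ring_hom_ring R S h
    using global_ring_iso_ring_hom_ring[OF assms(1) ideal.axioms(2)[OF assms(2)]] .
  note h = global_ring_isoD[OF assms(1)]
  show ?thesis
  proof (rule idealI)
    show "subgroup (h ` I) (add_monoid S)"
      using group_hom.subgroup_img_is_subgroup[OF a_group_hom]
        additive_subgroup.a_subgroup[OF ideal.axioms(1)[OF assms(2)]] .
  next
    fix a x assume "a \<in> h ` I" and "x \<in> carrier S"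
    then obtain a' x' where "a' \<in> I" "a = h a'" "x' \<in> carrier R" "x = h x'"
      using h(2) by blast
    then show "x \<otimes>\<^bsub>S\<^esub> a \<in> h ` I" and "a \<otimes>\<^bsub>S\<^esub> x \<in> h ` I"
      using ideal.I_l_closed[OF assms(2)] ideal.I_r_closed[OF assms(2)]
      by (metis h(3) imageI)+
  qed (rule S.ring_axioms)
qed

lemma bij_image_Collect_eq:
  assumes "bij h"
    and "\<And>A. P A \<Longrightarrow> Q (h ` A)" and "\<And>B. Q B \<Longrightarrow> P (Hilbert_Choice.inv h ` B)"
  shows "image h ` Collect P = Collect Q"
proof (intro equalityI subsetI)
  fix B assume "B \<in> Collect Q"
  moreover have "B = h ` Hilbert_Choice.inv h ` B"
    using assms(1) by (simp add: image_image bij_is_surj surj_f_inv_f)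
  ultimately show "B \<in> image h ` Collect P"
    using assms(3) by blast
qed (use assms(2) in blast)

lemma global_ring_iso_genideal:
  assumes "global_ring_iso h R S"
  shows "h ` genideal R X = genideal S (h ` X)"
proof -
  note h = global_ring_isoD[OF assms]
  have "image h ` {I. ideal I R \<and> X \<subseteq> I} = {J. ideal J S \<and> h ` X \<subseteq> J}"
  proof (rule bij_image_Collect_eq[OF h(1)])
    fix J assume "ideal J S \<and> h ` X \<subseteq> J"
    moreover have "X \<subseteq> Hilbert_Choice.inv h ` h ` X"
      using h(1) by (simp add: bij_is_inj)
    ultimately show "ideal (Hilbert_Choice.inv h ` J) R \<and> X \<subseteq> Hilbert_Choice.inv h ` J"
      using global_ring_iso_ideal[OF global_ring_iso_inv[OF assms]] by blast
  qed (use global_ring_iso_ideal[OF assms] in blast)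
  then show ?thesis
    unfolding genideal_def using bij_image_INT[OF h(1), where B=id] by simp
qed

lemma image_a_r_coset:
  assumes "\<And>x y. h (x \<oplus>\<^bsub>R\<^esub> y) = h x \<oplus>\<^bsub>S\<^esub> h y"
  shows "h ` (I +>\<^bsub>R\<^esub> a) = h ` I +>\<^bsub>S\<^esub> h a"
  unfolding a_r_coset_def' by (auto simp: assms intro!: image_eqI[where f=h, OF assms[symmetric]])

lemma image_set_add:
  assumes "\<And>x y. h (x \<oplus>\<^bsub>R\<^esub> y) = h x \<oplus>\<^bsub>S\<^esub> h y"
  shows "h ` (A <+>\<^bsub>R\<^esub> B) = h ` A <+>\<^bsub>S\<^esub> h ` B"
  unfolding set_add_def' by (auto simp: assms intro!: image_eqI[where f=h, OF assms[symmetric]]; blast)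

lemma global_ring_iso_FactRing:
  assumes "global_ring_iso h R S"
  shows "global_ring_iso (image h) (R Quot I) (S Quot h ` I)"
proof -
  note h = global_ring_isoD[OF assms]
  note coset = image_a_r_coset[where h=h and R=R and S=S, OF h(4)]
  have "image h ` A_RCOSETS R I = A_RCOSETS S (h ` I)"
    unfolding A_RCOSETS_def' h(2)[symmetric]
    by (auto simp: coset intro!: image_eqI[where f="image h", OF coset[symmetric]])
  moreover have "h ` rcoset_mult R I A B = rcoset_mult S (h ` I) (h ` A) (h ` B)" for A B
    unfolding rcoset_mult_def by (auto simp: coset h(3) image_UN)
  moreover have "bij (image h)"
    using bij_betw_Pow[OF h(1)] by simp
  ultimately show ?thesis
    unfolding global_ring_iso_def FactRing_def
    using image_set_add[where h=h and R=R and S=S, OF h(4)] coset h(5) by simp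
qed

definition graded_ideal :: "'a ring \<Rightarrow> ('d \<Rightarrow> 'a set) \<Rightarrow> 'a set \<Rightarrow> bool" where
  "graded_ideal R C I \<longleftrightarrow> ideal I R \<and>
     (\<forall>x\<in>I. \<exists>D y. finite D \<and> (\<forall>d\<in>D. y d \<in> I \<inter> C d) \<and> x = finsum R y D)"

lemma global_ring_iso_graded_ideal:
  assumes "global_ring_iso h R S" and "\<And>d. h ` C d = C' d" and "graded_ideal R C I"
  shows "graded_ideal S C' (h ` I)"
proof -
  have I: "ideal I R" using assms(3) unfolding graded_ideal_def by blast
  interpret ring_hom_ring R S h
    using global_ring_iso_ring_hom_ring[OF assms(1) ideal.axioms(2)[OF I]] .
  have "\<exists>D y. finite D \<and> (\<forall>d\<in>D. y d \<in> h ` I \<inter> C' d) \<and> h x = finsum S y D" if "x \<in> I" for x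
  proof -
    obtain D y where D: "finite D" "\<forall>d\<in>D. y d \<in> I \<inter> C d" "x = finsum R y D"
      using assms(3) \<open>x \<in> I\<close> unfolding graded_ideal_def by blast
    then have "y \<in> D \<rightarrow> carrier R"
      using ideal.axioms(1)[OF I] additive_subgroup.a_subset by blast
    then have "h x = finsum S (h \<circ> y) D"
      using D(3) by simp
    then show ?thesis
      using D(1,2) assms(2) by (intro exI[of _ D] exI[of _ "h \<circ> y"]) auto
  qed
  then show ?thesis
    unfolding graded_ideal_def using global_ring_iso_ideal[OF assms(1) I] by blast
qed

lemma global_ring_iso_trivial_meet:
  assumes "global_ring_iso h R S" and "h ` C = C'" and "I \<inter> C = {\<zero>\<^bsub>R\<^esub>}"
  shows "h ` I \<inter> C' = {\<zero>\<^bsub>S\<^esub>}"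
  using assms(3) global_ring_isoD(1,6)[OF assms(1)]
  by (simp add: assms(2)[symmetric] image_Int[symmetric] bij_is_inj)

lemma global_ring_iso_graded_ideals_trivial_at:
  assumes "global_ring_iso h R S" and "\<And>d. h ` C d = C' d"
  shows "h ` \<Union>{I. graded_ideal R C I \<and> I \<inter> C z = {\<zero>\<^bsub>R\<^esub>}} =
    \<Union>{J. graded_ideal S C' J \<and> J \<inter> C' z = {\<zero>\<^bsub>S\<^esub>}}"
proof -
  note h = global_ring_isoD[OF assms(1)]
  note h' = global_ring_iso_inv[OF assms(1)]
  have C: "Hilbert_Choice.inv h ` C' d = C d" for d
    using h(1) by (simp add: assms(2)[symmetric] image_image bij_is_inj)
  have "image h ` {I. graded_ideal R C I \<and> I \<inter> C z = {\<zero>\<^bsub>R\<^esub>}} =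
      {J. graded_ideal S C' J \<and> J \<inter> C' z = {\<zero>\<^bsub>S\<^esub>}}"
  proof (rule bij_image_Collect_eq[OF h(1)])
    show "graded_ideal S C' (h ` I) \<and> h ` I \<inter> C' z = {\<zero>\<^bsub>S\<^esub>}"
      if "graded_ideal R C I \<and> I \<inter> C z = {\<zero>\<^bsub>R\<^esub>}" for I
      using that
      by (simp add: global_ring_iso_graded_ideal[OF assms] global_ring_iso_trivial_meet[OF assms(1,2)])
    show "graded_ideal R C (Hilbert_Choice.inv h ` J) \<and> Hilbert_Choice.inv h ` J \<inter> C z = {\<zero>\<^bsub>R\<^esub>}"
      if "graded_ideal S C' J \<and> J \<inter> C' z = {\<zero>\<^bsub>S\<^esub>}" for J
      using that
      by (simp add: global_ring_iso_graded_ideal[OF h' C] global_ring_iso_trivial_meet[OF h' C])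
  qed
  then show ?thesis by (simp add: image_Union)
qed


lemma ring_aut_add: "ring_aut f \<Longrightarrow> f (x + y) = f x + f y"
  and ring_aut_mult: "ring_aut f \<Longrightarrow> f (x * y) = f x * f y"
  and ring_aut_one: "ring_aut f \<Longrightarrow> f 1 = 1"
  and ring_aut_bij: "ring_aut f \<Longrightarrow> bij f"
  unfolding ring_aut_def by blast+

lemma ring_aut_zero: "ring_aut f \<Longrightarrow> f 0 = 0"
  using ring_aut_add[of f 0 0] by simp

lemma ring_aut_inv_apply: "ring_aut f \<Longrightarrow> Hilbert_Choice.inv f (f x) = x"
  by (simp add: ring_aut_bij bij_is_inj)

lemma ring_aut_apply_inv: "ring_aut f \<Longrightarrow> f (Hilbert_Choice.inv f x) = x"
  by (simp add: ring_aut_bij bij_is_surj surj_f_inv_f)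

lemma ring_aut_inv:
  assumes "ring_aut f"
  shows "ring_aut (Hilbert_Choice.inv f)"
  unfolding ring_aut_def
  using ring_aut_inv_apply[OF assms] ring_aut_apply_inv[OF assms] ring_aut_bij[OF assms]
    ring_aut_add[OF assms] ring_aut_mult[OF assms] ring_aut_one[OF assms]
  by (metis bij_imp_bij_inv)

lemma ring_aut_comp: "ring_aut f \<Longrightarrow> ring_aut g \<Longrightarrow> ring_aut (f \<circ> g)"
  unfolding ring_aut_def by (auto intro: bij_comp)

lemma ring_aut_id: "ring_aut id"
  unfolding ring_aut_def by simp

lemma central_commute: "central z \<Longrightarrow> z * x = x * z"
  unfolding central_def by blast

lemma central_one: "central 1"
  unfolding central_def by simp

lemma central_mult: "central a \<Longrightarrow> central b \<Longrightarrow> central (a * b)"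
  unfolding central_def by (metis mult.assoc)

lemma central_inverse:
  assumes "central s" and "s * y = 1" and "y * s = 1"
  shows "central y"
  unfolding central_def
proof
  fix r
  have "y * r = y * (r * s) * y"
    using assms(2) by (simp add: mult.assoc)
  also have "\<dots> = (y * s) * r * y"
    using central_commute[OF assms(1), of r] by (simp add: mult.assoc)
  also have "\<dots> = r * y"
    using assms(3) by simp
  finally show "y * r = r * y" .
qed

lemma left_inverse_eq_right_inverse:
  fixes a :: "'a::monoid_mult"
  assumes "a * b = 1" and "b * c = 1"
  shows "a = c"
  by (metis assms mult.assoc mult_1_left mult_1_right)

lemma ring_aut_central:
  assumes "ring_aut f" and "central z"
  shows "central (f z)"
  unfolding central_def
  by (metis assms central_commute ring_aut_apply_inv ring_aut_mult)

lemma invertible_elem_one: "invertible_elem 1"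
  unfolding invertible_elem_def by auto

lemma invertible_elem_mult:
  assumes "invertible_elem a" and "invertible_elem b"
  shows "invertible_elem (a * b)"
proof -
  obtain a' b' where "a * a' = 1" "a' * a = 1" "b * b' = 1" "b' * b = 1"
    using assms unfolding invertible_elem_def by blast
  then have "a * b * (b' * a') = 1" and "b' * a' * (a * b) = 1"
    by (simp_all add: mult.assoc flip: mult.assoc[of b b'] mult.assoc[of a' a])
  then show ?thesis
    unfolding invertible_elem_def by blast
qed

lemma ring_aut_invertible_elem:
  assumes "ring_aut f" and "invertible_elem z"
  shows "invertible_elem (f z)"
  using assms(2) unfolding invertible_elem_def
  by (metis assms(1) ring_aut_mult ring_aut_one)


section \<open>Rescaling the generators of the free skew ring\<close>

text \<open>In the free skew ring \<open>(c\<^sub>a\<^sub>1 X\<^sub>a\<^sub>1) \<cdots> (c\<^sub>a\<^sub>n X\<^sub>a\<^sub>n) = word_scalar c [a\<^sub>1,\<dots>,a\<^sub>n] X\<^sub>a\<^sub>1\<^sub>\<cdots>\<^sub>a\<^sub>n\<close>,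
  so \<open>rescale c\<close> is the \<open>R\<close>-linear map \<open>X\<^sub>a \<mapsto> c\<^sub>a X\<^sub>a\<close>.\<close>
fun word_scalar :: "('a::ring_1 \<Rightarrow> 'a) \<Rightarrow> ('a \<Rightarrow> 'a) \<Rightarrow> (gen \<Rightarrow> 'a) \<Rightarrow> gen list \<Rightarrow> 'a" where
  "word_scalar sh1 sh2 c [] = 1"
| "word_scalar sh1 sh2 c (a # w) = c a * gen_aut sh1 sh2 a (word_scalar sh1 sh2 c w)"

definition rescale ::
    "('a::ring_1 \<Rightarrow> 'a) \<Rightarrow> ('a \<Rightarrow> 'a) \<Rightarrow> (gen \<Rightarrow> 'a) \<Rightarrow> (gen list \<Rightarrow> 'a) \<Rightarrow> gen list \<Rightarrow> 'a" where
  "rescale sh1 sh2 c f = (\<lambda>w. f w * word_scalar sh1 sh2 c w)"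

lemma rescale_emb: "rescale sh1 sh2 c (emb r) = emb r"
  unfolding rescale_def emb_def by auto

locale ring_aut_pair =
  fixes sh1 sh2 :: "'a::ring_1 \<Rightarrow> 'a"
  assumes aut1: "ring_aut sh1" and aut2: "ring_aut sh2"
begin

lemma ring_aut_gen_aut: "ring_aut (gen_aut sh1 sh2 a)"
  by (cases a) (simp_all add: ring_aut_comp ring_aut_inv aut1 aut2)

lemma ring_aut_word_aut: "ring_aut (word_aut sh1 sh2 w)"
  by (induction w) (simp_all only: word_aut.simps ring_aut_id ring_aut_comp ring_aut_gen_aut)

lemma word_scalar_append:
  "word_scalar sh1 sh2 c (u @ v) =
     word_scalar sh1 sh2 c u * word_aut sh1 sh2 u (word_scalar sh1 sh2 c v)"
  by (induction u) (simp_all add: ring_aut_mult[OF ring_aut_gen_aut] mult.assoc)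

context
  fixes c :: "gen \<Rightarrow> 'a"
  assumes central_c: "\<And>a. central (c a)" and invertible_c: "\<And>a. invertible_elem (c a)"
begin

lemma central_word_scalar: "central (word_scalar sh1 sh2 c w)"
  by (induction w)
    (simp_all add: central_one central_mult central_c ring_aut_central[OF ring_aut_gen_aut])

lemma invertible_word_scalar: "invertible_elem (word_scalar sh1 sh2 c w)"
  by (induction w) (simp_all add: invertible_elem_one invertible_elem_mult invertible_c
      ring_aut_invertible_elem[OF ring_aut_gen_aut])

lemma rescale_skew_mult:
  "skew_mult sh1 sh2 (rescale sh1 sh2 c f) (rescale sh1 sh2 c g) =
     rescale sh1 sh2 c (skew_mult sh1 sh2 f g)"
proof
  fix w
  let ?\<kappa> = "word_scalar sh1 sh2 c" and ?\<tau> = "word_aut sh1 sh2"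
  have "f u * ?\<kappa> u * ?\<tau> u (g v * ?\<kappa> v) = f u * ?\<tau> u (g v) * ?\<kappa> (u @ v)" for u v
  proof -
    have "f u * ?\<kappa> u * ?\<tau> u (g v * ?\<kappa> v) = f u * ?\<kappa> u * (?\<tau> u (g v) * ?\<tau> u (?\<kappa> v))"
      by (simp add: ring_aut_mult[OF ring_aut_word_aut])
    also have "\<dots> = f u * ?\<tau> u (g v) * (?\<kappa> u * ?\<tau> u (?\<kappa> v))"
      using central_commute[OF central_word_scalar, of u "?\<tau> u (g v)"] by (metis mult.assoc)
    finally show ?thesis
      by (simp add: word_scalar_append)
  qed
  then show "skew_mult sh1 sh2 (rescale sh1 sh2 c f) (rescale sh1 sh2 c g) w =
      rescale sh1 sh2 c (skew_mult sh1 sh2 f g) w"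
    unfolding skew_mult_def rescale_def sum_distrib_right by (simp only: append_take_drop_id)
qed

lemma rescale_eq_0_iff: "rescale sh1 sh2 c f w = 0 \<longleftrightarrow> f w = 0"
proof -
  obtain u where "word_scalar sh1 sh2 c w * u = 1"
    using invertible_word_scalar unfolding invertible_elem_def by blast
  then show ?thesis
    unfolding rescale_def by (metis mult.assoc mult_1_right mult_zero_left)
qed

lemma bij_rescale: "bij (rescale sh1 sh2 c)"
proof -
  obtain u where u: "\<And>w. word_scalar sh1 sh2 c w * u w = 1 \<and> u w * word_scalar sh1 sh2 c w = 1"
    using invertible_word_scalar unfolding invertible_elem_def by metis
  let ?unscale = "\<lambda>f w. f w * u w"
  have "?unscale \<circ> rescale sh1 sh2 c = id" and "rescale sh1 sh2 c \<circ> ?unscale = id"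
    using u by (auto simp: rescale_def mult.assoc)
  then show ?thesis
    by (rule o_bij)
qed

lemma rescale_image_support_closed:
  assumes "\<And>f g. {w. f w \<noteq> 0} = {w. g w \<noteq> 0} \<Longrightarrow> f \<in> A \<longleftrightarrow> g \<in> A"
  shows "rescale sh1 sh2 c ` A = A"
proof -
  have supp: "{w. rescale sh1 sh2 c f w \<noteq> 0} = {w. f w \<noteq> 0}" for f
    by (simp add: rescale_eq_0_iff)
  have "f \<in> rescale sh1 sh2 c ` A" if "f \<in> A" for f
  proof -
    let ?g = "Hilbert_Choice.inv (rescale sh1 sh2 c) f"
    have g: "rescale sh1 sh2 c ?g = f"
      using bij_rescale by (simp add: bij_is_surj surj_f_inv_f)
    then have "?g \<in> A"
      using assms[of f ?g] supp[of ?g] that by simp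
    then show ?thesis
      by (metis g imageI)
  qed
  then show ?thesis
    using assms supp by blast
qed

lemma rescale_free_comp: "rescale sh1 sh2 c ` free_comp sh1 sh2 d = free_comp sh1 sh2 d"
proof (rule rescale_image_support_closed)
  fix f g :: "gen list \<Rightarrow> 'a"
  assume supp: "{w. f w \<noteq> 0} = {w. g w \<noteq> 0}"
  then have "f w \<noteq> 0 \<longleftrightarrow> g w \<noteq> 0" for w
    by blast
  then show "f \<in> free_comp sh1 sh2 d \<longleftrightarrow> g \<in> free_comp sh1 sh2 d"
    unfolding free_comp_def free_skew_def using supp by simp
qed

lemma rescale_global_ring_iso:
  "global_ring_iso (rescale sh1 sh2 c) (free_skew sh1 sh2) (free_skew sh1 sh2)"
proof -
  have "rescale sh1 sh2 c ` carrier (free_skew sh1 sh2) = carrier (free_skew sh1 sh2)"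
    by (rule rescale_image_support_closed) (simp add: free_skew_def)
  moreover have "rescale sh1 sh2 c (f \<otimes>\<^bsub>free_skew sh1 sh2\<^esub> g) =
      rescale sh1 sh2 c f \<otimes>\<^bsub>free_skew sh1 sh2\<^esub> rescale sh1 sh2 c g" for f g
    by (simp add: free_skew_def rescale_skew_mult)
  moreover have "rescale sh1 sh2 c (f \<oplus>\<^bsub>free_skew sh1 sh2\<^esub> g) =
      rescale sh1 sh2 c f \<oplus>\<^bsub>free_skew sh1 sh2\<^esub> rescale sh1 sh2 c g" for f g
    by (simp add: free_skew_def rescale_def distrib_right)
  moreover have "rescale sh1 sh2 c \<one>\<^bsub>free_skew sh1 sh2\<^esub> = \<one>\<^bsub>free_skew sh1 sh2\<^esub>"
    and "rescale sh1 sh2 c \<zero>\<^bsub>free_skew sh1 sh2\<^esub> = \<zero>\<^bsub>free_skew sh1 sh2\<^esub>"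
    by (simp_all add: free_skew_def rescale_def fun_eq_iff)
  ultimately show ?thesis
    unfolding global_ring_iso_def using bij_rescale by blast
qed

end

end


definition pair_rel :: "gen \<Rightarrow> gen \<Rightarrow> 'a::ring_1 \<Rightarrow> gen list \<Rightarrow> 'a" where
  "pair_rel a b r = (\<lambda>w. (if w = [a, b] then 1 else 0) - emb r w)"

definition comm_rel :: "gen \<Rightarrow> gen \<Rightarrow> gen list \<Rightarrow> 'a::ring_1" where
  "comm_rel a b = (\<lambda>w. (if w = [a, b] then 1 else 0) - (if w = [b, a] then 1 else 0))"

lemma skew_mult_emb_left: "skew_mult sh1 sh2 (emb r) g = (\<lambda>w. r * g w)"
proof
  fix w
  have "skew_mult sh1 sh2 (emb r) g w =
      (\<Sum>n\<in>{0..length w}. if n = 0 then r * g w else 0)"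
    unfolding skew_mult_def emb_def by (rule sum.cong) auto
  then show "skew_mult sh1 sh2 (emb r) g w = r * g w"
    by simp
qed

lemma rescale_pair_rel:
  assumes "r = word_scalar sh1 sh2 c [a, b] * r'"
  shows "rescale sh1 sh2 c (pair_rel a b r) = (\<lambda>w. word_scalar sh1 sh2 c [a, b] * pair_rel a b r' w)"
  unfolding rescale_def pair_rel_def emb_def using assms by (auto simp: algebra_simps)

lemma rescale_comm_rel:
  assumes "word_scalar sh1 sh2 c [a, b] = word_scalar sh1 sh2 c [b, a]" and "a \<noteq> b"
  shows "rescale sh1 sh2 c (comm_rel a b) = (\<lambda>w. word_scalar sh1 sh2 c [a, b] * comm_rel a b w)"
  unfolding rescale_def comm_rel_def using assms by (auto simp: algebra_simps)

lemma ideal_scalar_mult_closed: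
  assumes "ideal I (free_skew sh1 sh2)" and "g \<in> I"
  shows "(\<lambda>w. k * g w) \<in> I"
proof -
  have "finite {w. emb k w \<noteq> 0}"
    by (rule finite_subset[of _ "{[]}"]) (auto simp: emb_def)
  then have "emb k \<otimes>\<^bsub>free_skew sh1 sh2\<^esub> g \<in> I"
    using ideal.I_l_closed[OF assms] by (simp add: free_skew_def)
  then show ?thesis
    by (simp add: free_skew_def skew_mult_emb_left)
qed

lemma ideal_unit_scalar_mult_iff:
  assumes "ideal I (free_skew sh1 sh2)" and "invertible_elem k"
  shows "(\<lambda>w. k * g w) \<in> I \<longleftrightarrow> g \<in> I"
proof
  obtain k' where "k' * k = 1"
    using assms(2) unfolding invertible_elem_def by blast
  then have "g = (\<lambda>w. k' * (k * g w))"
    by (simp add: mult.assoc[symmetric])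
  then show "(\<lambda>w. k * g w) \<in> I \<Longrightarrow> g \<in> I"
    using ideal_scalar_mult_closed[OF assms(1)] by metis
qed (rule ideal_scalar_mult_closed[OF assms(1)])

context ring_aut_pair
begin

lemma skew_mult_Xg: "skew_mult sh1 sh2 (Xg a) (Xg b) = (\<lambda>w. if w = [a, b] then 1 else 0)"
proof
  fix w
  have "Xg a (take n w) * word_aut sh1 sh2 (take n w) (Xg b (drop n w)) =
      (if n = 1 \<and> w = [a, b] then 1 else 0)" if "n \<le> length w" for n
  proof (cases "take n w = [a] \<and> drop n w = [b]")
    case True
    have "n = 1 \<and> w = [a, b]"
    proof
      show "n = 1"
        using that arg_cong[OF conjunct1[OF True], of length] by (simp add: min_def split: if_splits)
      show "w = [a, b]"
        using True append_take_drop_id[of n w] by simp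
    qed
    then show ?thesis
      by (simp add: Xg_def ring_aut_one[OF ring_aut_gen_aut])
  next
    case False
    then show ?thesis
      by (auto simp: Xg_def ring_aut_zero[OF ring_aut_gen_aut])
  qed
  then have "skew_mult sh1 sh2 (Xg a) (Xg b) w =
      (\<Sum>n\<in>{0..length w}. if n = 1 \<and> w = [a, b] then 1 else 0)"
    unfolding skew_mult_def by (intro sum.cong) auto
  then show "skew_mult sh1 sh2 (Xg a) (Xg b) w = (if w = [a, b] then 1 else 0)"
    by (cases "w = [a, b]") simp_all
qed

lemma tgwc_rels_eq:
  "tgwc_rels sh1 sh2 t1 t2 =
     {pair_rel P1 M1 (sh1 t1), pair_rel M1 P1 (Hilbert_Choice.inv sh1 t1),
      pair_rel P2 M2 (sh2 t2), pair_rel M2 P2 (Hilbert_Choice.inv sh2 t2),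
      comm_rel P1 M2, comm_rel M1 P2}"
  unfolding tgwc_rels_def Let_def free_skew_def pair_rel_def comm_rel_def
  by (simp add: skew_mult_Xg)

lemma rescale_tgwc_ideal:
  fixes c :: "gen \<Rightarrow> 'a"
  defines "\<kappa> \<equiv> word_scalar sh1 sh2 c"
  assumes "\<And>a. central (c a)" and "\<And>a. invertible_elem (c a)"
    and "sh1 t1 = \<kappa> [P1, M1] * sh1 t1'"
    and "Hilbert_Choice.inv sh1 t1 = \<kappa> [M1, P1] * Hilbert_Choice.inv sh1 t1'"
    and "sh2 t2 = \<kappa> [P2, M2] * sh2 t2'"
    and "Hilbert_Choice.inv sh2 t2 = \<kappa> [M2, P2] * Hilbert_Choice.inv sh2 t2'"
    and "\<kappa> [P1, M2] = \<kappa> [M2, P1]" and "\<kappa> [M1, P2] = \<kappa> [P2, M1]"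
  shows "rescale sh1 sh2 c ` tgwc_ideal sh1 sh2 t1 t2 = tgwc_ideal sh1 sh2 t1' t2'"
proof -
  have rels: "rescale sh1 sh2 c ` tgwc_rels sh1 sh2 t1 t2 \<subseteq> I \<longleftrightarrow> tgwc_rels sh1 sh2 t1' t2' \<subseteq> I"
    if "ideal I (free_skew sh1 sh2)" for I
  proof -
    note unit = ideal_unit_scalar_mult_iff[OF that invertible_word_scalar[where c=c, OF assms(2,3)]]
    have pair: "rescale sh1 sh2 c (pair_rel a b r) \<in> I \<longleftrightarrow> pair_rel a b r' \<in> I"
      if "r = \<kappa> [a, b] * r'" for a b r r'
      by (simp only: rescale_pair_rel[OF that[unfolded \<kappa>_def]] unit)
    have comm: "rescale sh1 sh2 c (comm_rel a b) \<in> I \<longleftrightarrow> comm_rel a b \<in> I"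
      if "\<kappa> [a, b] = \<kappa> [b, a]" and "a \<noteq> b" for a b
      by (simp only: rescale_comm_rel[OF that[unfolded \<kappa>_def]] unit)
    show ?thesis
      unfolding tgwc_rels_eq image_insert image_empty insert_subset
      using pair[OF assms(4)] pair[OF assms(5)] pair[OF assms(6)] pair[OF assms(7)]
        comm[OF assms(8)] comm[OF assms(9)] by simp
  qed
  have "rescale sh1 sh2 c ` tgwc_ideal sh1 sh2 t1 t2 =
      genideal (free_skew sh1 sh2) (rescale sh1 sh2 c ` tgwc_rels sh1 sh2 t1 t2)"
    unfolding tgwc_ideal_def by (rule global_ring_iso_genideal[OF rescale_global_ring_iso[OF assms(2,3)]])
  also have "\<dots> = tgwc_ideal sh1 sh2 t1' t2'"
    unfolding tgwc_ideal_def genideal_def using rels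
    by (intro arg_cong[where f=Inter] Collect_cong) blast
  finally show ?thesis .
qed

end


section \<open>Isomorphisms induced from the free skew ring\<close>

lemma tgwc_graded_ideal_eq:
  "tgwc_graded_ideal sh1 sh2 t1 t2 = graded_ideal (tgwc sh1 sh2 t1 t2) (tgwc_comp sh1 sh2 t1 t2)"
  unfolding tgwc_graded_ideal_def graded_ideal_def by (rule ext) simp

context
  fixes h :: "(gen list \<Rightarrow> 'a::ring_1) \<Rightarrow> gen list \<Rightarrow> 'a" and sh1 sh2 :: "'a \<Rightarrow> 'a"
    and t1 t2 t1' t2' :: 'a
  assumes iso: "global_ring_iso h (free_skew sh1 sh2) (free_skew sh1 sh2)"
    and tgwc_ideal_image: "h ` tgwc_ideal sh1 sh2 t1 t2 = tgwc_ideal sh1 sh2 t1' t2'"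
    and free_comp_image: "\<And>d. h ` free_comp sh1 sh2 d = free_comp sh1 sh2 d"
begin

lemma tgwc_induced_iso:
  "global_ring_iso (image h) (tgwc sh1 sh2 t1 t2) (tgwc sh1 sh2 t1' t2')"
  using global_ring_iso_FactRing[OF iso, of "tgwc_ideal sh1 sh2 t1 t2"]
  unfolding tgwc_def tgwc_ideal_image .

lemma tgwc_induced_proj:
  "image h (tgwc_proj sh1 sh2 t1 t2 f) = tgwc_proj sh1 sh2 t1' t2' (h f)"
  unfolding tgwc_proj_def tgwc_ideal_image[symmetric]
  by (rule image_a_r_coset[where R="free_skew sh1 sh2" and S="free_skew sh1 sh2",
        OF global_ring_isoD(4)[OF iso]])

lemma tgwc_induced_comp:
  "image h ` tgwc_comp sh1 sh2 t1 t2 d = tgwc_comp sh1 sh2 t1' t2' d"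
  unfolding tgwc_comp_def image_image tgwc_induced_proj
  by (simp add: image_image[symmetric, of _ h] free_comp_image)

lemma tgwa_induced_ideal:
  "image h ` tgwa_ideal sh1 sh2 t1 t2 = tgwa_ideal sh1 sh2 t1' t2'"
  unfolding tgwa_ideal_def tgwc_graded_ideal_eq global_ring_iso_genideal[OF tgwc_induced_iso]
  by (simp only: global_ring_iso_graded_ideals_trivial_at[where C="tgwc_comp sh1 sh2 t1 t2"
        and C'="tgwc_comp sh1 sh2 t1' t2'", OF tgwc_induced_iso tgwc_induced_comp])

lemma tgwa_induced_iso:
  "global_ring_iso (image (image h)) (tgwa sh1 sh2 t1 t2) (tgwa sh1 sh2 t1' t2')"
  using global_ring_iso_FactRing[OF tgwc_induced_iso, of "tgwa_ideal sh1 sh2 t1 t2"]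
  unfolding tgwa_def tgwa_induced_ideal .

lemma tgwa_induced_proj:
  "image (image h) (tgwa_proj sh1 sh2 t1 t2 f) = tgwa_proj sh1 sh2 t1' t2' (h f)"
  unfolding tgwa_proj_def tgwa_induced_ideal[symmetric] tgwc_induced_proj[symmetric]
  by (rule image_a_r_coset[where R="tgwc sh1 sh2 t1 t2" and S="tgwc sh1 sh2 t1' t2'",
        OF global_ring_isoD(4)[OF tgwc_induced_iso]])

lemma graded_R_ring_iso_induced:
  assumes "\<And>r. h (emb r) = emb r"
  shows "graded_R_ring_iso sh1 sh2 t1 t2 t1' t2' (image (image h))"
proof -
  have "image (image h) ` tgwa_comp sh1 sh2 t1 t2 d = tgwa_comp sh1 sh2 t1' t2' d" for d
    unfolding tgwa_comp_def image_image tgwa_induced_proj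
    by (simp add: image_image[symmetric, of _ h] free_comp_image)
  moreover have "image (image h) (tgwa_emb sh1 sh2 t1 t2 r) = tgwa_emb sh1 sh2 t1' t2' r" for r
    unfolding tgwa_emb_def tgwa_induced_proj assms ..
  ultimately show ?thesis
    unfolding graded_R_ring_iso_def
    using global_ring_iso_imp_ring_iso[OF tgwa_induced_iso] by simp
qed

end


text \<open>\<open>y\<^sub>i\<close> stands for \<open>s\<^sub>i\<^sup>-\<^sup>1\<close>.\<close>
definition rescaling_coeff :: "('a::ring_1 \<Rightarrow> 'a) \<Rightarrow> ('a \<Rightarrow> 'a) \<Rightarrow> 'a \<Rightarrow> 'a \<Rightarrow> gen \<Rightarrow> 'a" where
  "rescaling_coeff sh1 sh2 y1 y2 a =
     (case a of P1 \<Rightarrow> sh1 y1 | M1 \<Rightarrow> 1 | P2 \<Rightarrow> 1 | M2 \<Rightarrow> Hilbert_Choice.inv sh2 y2)"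

context ring_aut_pair
begin

context
  fixes s1 s2 y1 y2 :: 'a
  assumes central_s1: "central s1" and central_s2: "central s2"
    and y1: "s1 * y1 = 1" "y1 * s1 = 1" and y2: "s2 * y2 = 1" "y2 * s2 = 1"
begin

abbreviation \<kappa> :: "gen list \<Rightarrow> 'a" where
  "\<kappa> \<equiv> word_scalar sh1 sh2 (rescaling_coeff sh1 sh2 y1 y2)"

lemma central_rescaling_coeff: "central (rescaling_coeff sh1 sh2 y1 y2 a)"
  using central_inverse[OF central_s1 y1] central_inverse[OF central_s2 y2]
  by (cases a) (simp_all add: rescaling_coeff_def central_one ring_aut_central aut1 aut2
      ring_aut_inv)

lemma invertible_rescaling_coeff: "invertible_elem (rescaling_coeff sh1 sh2 y1 y2 a)"
proof -
  have "invertible_elem y1" "invertible_elem y2"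
    using y1 y2 unfolding invertible_elem_def by blast+
  then show ?thesis
    by (cases a) (simp_all add: rescaling_coeff_def invertible_elem_one ring_aut_invertible_elem
        aut1 aut2 ring_aut_inv)
qed

lemmas aut_simps = ring_aut_one[OF aut1] ring_aut_one[OF aut2]
  ring_aut_one[OF ring_aut_inv[OF aut1]] ring_aut_one[OF ring_aut_inv[OF aut2]]
  ring_aut_inv_apply[OF aut1] ring_aut_inv_apply[OF aut2]
  ring_aut_apply_inv[OF aut1] ring_aut_apply_inv[OF aut2]

lemma rescaling_coeff_pair_scalars:
  shows "sh1 t1 = \<kappa> [P1, M1] * sh1 (s1 * t1)"
    and "Hilbert_Choice.inv sh1 t1 = \<kappa> [M1, P1] * Hilbert_Choice.inv sh1 (s1 * t1)"
    and "sh2 t2 = \<kappa> [P2, M2] * sh2 (s2 * t2)"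
    and "Hilbert_Choice.inv sh2 t2 = \<kappa> [M2, P2] * Hilbert_Choice.inv sh2 (s2 * t2)"
  using y1 y2
  by (simp_all add: rescaling_coeff_def aut_simps mult.assoc[symmetric]
      flip: ring_aut_mult[OF aut1] ring_aut_mult[OF aut2]
        ring_aut_mult[OF ring_aut_inv[OF aut1]] ring_aut_mult[OF ring_aut_inv[OF aut2]])

context
  assumes sh_commute: "sh1 \<circ> sh2 = sh2 \<circ> sh1"
    and consistent_s: "sh2 s1 * sh1 s2 = Hilbert_Choice.inv sh2 s1 * Hilbert_Choice.inv sh1 s2"
begin

lemma sh1_sh2_commute: "sh1 (sh2 x) = sh2 (sh1 x)"
  using sh_commute by (metis comp_apply)

lemma sh1_inv_sh2_commute: "sh1 (Hilbert_Choice.inv sh2 x) = Hilbert_Choice.inv sh2 (sh1 x)"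
  by (metis sh1_sh2_commute aut_simps(6,8))

text \<open>The consistency equation for \<open>s\<close>, in terms of the inverses \<open>y\<^sub>i\<close>: both sides are inverse
  to \<open>\<sigma>\<^sub>2\<^bsup>1/2\<^esup>(s\<^sub>1) \<sigma>\<^sub>1\<^bsup>1/2\<^esup>(s\<^sub>2)\<close>.\<close>
lemma consistency_for_inverses:
  "sh2 y1 * sh1 y2 = Hilbert_Choice.inv sh1 y2 * Hilbert_Choice.inv sh2 y1"
proof (rule left_inverse_eq_right_inverse)
  note mult_auts = ring_aut_mult[OF aut1] ring_aut_mult[OF aut2]
    ring_aut_mult[OF ring_aut_inv[OF aut1]] ring_aut_mult[OF ring_aut_inv[OF aut2]]
  have "sh2 y1 * sh1 y2 * sh2 s1 = sh2 y1 * sh2 s1 * sh1 y2"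
    using central_commute[OF ring_aut_central[OF aut2 central_s1]] by (simp add: mult.assoc)
  then show "sh2 y1 * sh1 y2 * (sh2 s1 * sh1 s2) = 1"
    using y1 y2 by (simp add: mult.assoc[symmetric] aut_simps flip: mult_auts)
  show "sh2 s1 * sh1 s2 * (Hilbert_Choice.inv sh1 y2 * Hilbert_Choice.inv sh2 y1) = 1"
    unfolding consistent_s using y1 y2
    by (simp add: mult.assoc aut_simps flip: mult_auts)
      (simp add: mult.assoc[symmetric] aut_simps flip: mult_auts)
qed

lemma rescaling_coeff_commute:
  shows "\<kappa> [P1, M2] = \<kappa> [M2, P1]" and "\<kappa> [M1, P2] = \<kappa> [P2, M1]"
proof -
  let ?\<rho> = "\<lambda>x. Hilbert_Choice.inv sh1 (sh2 x)"
  have "?\<rho> (\<kappa> [P1, M2]) = sh2 y1 * sh1 y2"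
    by (simp add: rescaling_coeff_def aut_simps ring_aut_mult[OF ring_aut_inv[OF aut1]]
        ring_aut_mult[OF aut2] flip: sh1_sh2_commute)
  also have "\<dots> = ?\<rho> (\<kappa> [M2, P1])"
    by (simp add: consistency_for_inverses rescaling_coeff_def aut_simps ring_aut_mult[OF ring_aut_inv[OF aut1]]
        ring_aut_mult[OF aut2] flip: sh1_inv_sh2_commute sh1_sh2_commute)
  finally show "\<kappa> [P1, M2] = \<kappa> [M2, P1]"
    by (metis aut_simps(6,7))
  show "\<kappa> [M1, P2] = \<kappa> [P2, M1]"
    by (simp add: rescaling_coeff_def aut_simps)
qed

lemma rescale_tgwc_ideal_scaled:
  "rescale sh1 sh2 (rescaling_coeff sh1 sh2 y1 y2) ` tgwc_ideal sh1 sh2 t1 t2 =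
     tgwc_ideal sh1 sh2 (s1 * t1) (s2 * t2)"
  by (rule rescale_tgwc_ideal[OF central_rescaling_coeff invertible_rescaling_coeff
        rescaling_coeff_pair_scalars rescaling_coeff_commute])

end

end

end


theorem mainTheorem10:
  fixes phi :: "'k::field \<Rightarrow> 'a::ring_1"
    and sh1 sh2 :: "'a \<Rightarrow> 'a"
    and t1 t2 s1 s2 t1' t2' :: 'a
  assumes "k_algebra_map phi"
    and "ring_aut sh1" and "ring_aut sh2"
    and "\<forall>c. sh1 (phi c) = phi c" and "\<forall>c. sh2 (phi c) = phi c"
    and "sh1 \<circ> sh2 = sh2 \<circ> sh1"
    and "central t1" and "central t2"
    and "regular_elem t1" and "regular_elem t2"
    and "sh2 t1 * sh1 t2 = Hilbert_Choice.inv sh2 t1 * Hilbert_Choice.inv sh1 t2"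
    and "central s1" and "central s2"
    and "invertible_elem s1" and "invertible_elem s2"
    and "sh2 s1 * sh1 s2 = Hilbert_Choice.inv sh2 s1 * Hilbert_Choice.inv sh1 s2"
    and "t1' = s1 * t1" and "t2' = s2 * t2"
  shows "\<exists>\<phi>. graded_R_ring_iso sh1 sh2 t1 t2 t1' t2' \<phi>"
proof -
  interpret ring_aut_pair sh1 sh2
    using assms(2,3) by unfold_locales
  obtain y1 y2 where y1: "s1 * y1 = 1" "y1 * s1 = 1" and y2: "s2 * y2 = 1" "y2 * s2 = 1"
    using assms(14,15) unfolding invertible_elem_def by blast
  let ?c = "rescaling_coeff sh1 sh2 y1 y2"
  note coeff = central_rescaling_coeff[OF assms(12,13) y1 y2]
    invertible_rescaling_coeff[OF assms(12,13) y1 y2]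
  have "graded_R_ring_iso sh1 sh2 t1 t2 t1' t2' (image (image (rescale sh1 sh2 ?c)))"
  proof (rule graded_R_ring_iso_induced)
    show "global_ring_iso (rescale sh1 sh2 ?c) (free_skew sh1 sh2) (free_skew sh1 sh2)"
      using rescale_global_ring_iso coeff by blast
    show "rescale sh1 sh2 ?c ` tgwc_ideal sh1 sh2 t1 t2 = tgwc_ideal sh1 sh2 t1' t2'"
      unfolding assms(17,18) by (rule rescale_tgwc_ideal_scaled[OF assms(12,13) y1 y2 assms(6,16)])
    show "rescale sh1 sh2 ?c ` free_comp sh1 sh2 d = free_comp sh1 sh2 d" for d
      using rescale_free_comp coeff by blast
  qed (rule rescale_emb)
  then show ?thesis
    by blast
qed

end
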